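(* Let $C_{\max}(x)\in\arg\max_{C\in\mathcal I}p_C(x)$ (ties broken in favor of the larger weight $w(C)$), and set $D_G(x)=\mathbb 1\{T(x)\ge 1-\alpha\}$ and $C_G(x)=C_{\max}(x)$. Then $(D_G,C_G)$ is a feasible policy (i.e. $mFCR(D_G,C_G)\le\alpha$) that minimizes $G(D,C)$. Moreover, if $\mathbb P(T(X)>1-\alpha)=0$, then $(D_G,C_G)$ is an optimal solution of the problem of maximizing $\Pi(D,C)$ over all $D:\mathcal X\to\{0,1\}$, $C:\mathcal X\to\mathcal I$ subject to $mFCR(D,C)\le\alpha$.
   Context: Let $(X,Y)\sim P_{XY}$ on $\mathcal X\times\mathcal Y$, $\alpha\in(0,1)$, $\mathcal I$ a finite collection of subsets of $\mathcal Y$, $w:\mathcal I\to(0,B)$ a bounded positive weight. For $C\in\mathcal I$ let $p_C(x)=\mathbb P(Y\in C\mid X=x)$ and $T(x)=\max_{C\in\mathcal I}p_C(x)$. For $D:\mathcal X\to\{0,1\}$, $C:\mathcal X\to\mathcal I$: $\Pi(D,C)=\mathbb E[w(C(X))p_{C(X)}(X)D(X)]$, $G(D,C)=\mathbb E[(1-p_{C(X)}(X)-\alpha)D(X)]$, and $mFCR(D,C)=\frac{\mathbb E[\mathbb 1\{Y\notin C(X)\}D(X)]}{\mathbb E[D(X)]}$ with the convention that it is $0$ if $\mathbb E[D(X)]=0$. *)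

theory Defs
  imports "HOL-Probability.Probability"
begin

text \<open>Expectations are taken w.r.t. the probability measure M on the sample space,
  X and Y being random variables with values in the measurable spaces MX and MY.
  p C x plays the role of P(Y in C | X = x).\<close>

definition Pi_obj :: "'a measure \<Rightarrow> ('a \<Rightarrow> 'x) \<Rightarrow> ('y set \<Rightarrow> real) \<Rightarrow> ('y set \<Rightarrow> 'x \<Rightarrow> real)
    \<Rightarrow> ('x \<Rightarrow> bool) \<Rightarrow> ('x \<Rightarrow> 'y set) \<Rightarrow> real" where
  "Pi_obj M X w p D C =
     (\<integral>\<omega>. w (C (X \<omega>)) * p (C (X \<omega>)) (X \<omega>) * of_bool (D (X \<omega>)) \<partial>M)"

definition G_obj :: "'a measure \<Rightarrow> ('a \<Rightarrow> 'x) \<Rightarrow> ('y set \<Rightarrow> 'x \<Rightarrow> real) \<Rightarrow> real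
    \<Rightarrow> ('x \<Rightarrow> bool) \<Rightarrow> ('x \<Rightarrow> 'y set) \<Rightarrow> real" where
  "G_obj M X p \<alpha> D C =
     (\<integral>\<omega>. (1 - p (C (X \<omega>)) (X \<omega>) - \<alpha>) * of_bool (D (X \<omega>)) \<partial>M)"

definition mFCR :: "'a measure \<Rightarrow> ('a \<Rightarrow> 'x) \<Rightarrow> ('a \<Rightarrow> 'y)
    \<Rightarrow> ('x \<Rightarrow> bool) \<Rightarrow> ('x \<Rightarrow> 'y set) \<Rightarrow> real" where
  "mFCR M X Y D C =
     (let den = (\<integral>\<omega>. of_bool (D (X \<omega>)) \<partial>M) in
      if den = 0 then 0
      else (\<integral>\<omega>. of_bool (Y \<omega> \<notin> C (X \<omega>) \<and> D (X \<omega>)) \<partial>M) / den)"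

definition policy :: "'x measure \<Rightarrow> 'y set set \<Rightarrow> ('x \<Rightarrow> bool) \<Rightarrow> ('x \<Rightarrow> 'y set) \<Rightarrow> bool" where
  "policy MX I D C \<longleftrightarrow> D \<in> measurable MX (count_space UNIV) \<and> C \<in> measurable MX (count_space I)"

definition Tmax :: "'y set set \<Rightarrow> ('y set \<Rightarrow> 'x \<Rightarrow> real) \<Rightarrow> 'x \<Rightarrow> real" where
  "Tmax I p x = Max ((\<lambda>C. p C x) ` I)"

end

theory Submission
  imports Defs
begin

text \<open>By the tower property the expected number of false coverages of a policy \<open>(D, C)\<close>
  is \<open>E[(1 - p_{C(X)}(X)) D(X)]\<close>, so \<open>mFCR(D, C) \<le> \<alpha>\<close> is equivalent to \<open>G(D, C) \<le> 0\<close>.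
  The integrand \<open>(1 - p_{C(X)}(X) - \<alpha>) D(X)\<close> of \<open>G\<close> is minimised pointwise by predicting a
  maximiser of \<open>p\<close> and selecting exactly where \<open>T(X) \<ge> 1 - \<alpha>\<close>, which gives feasibility and
  \<open>G\<close>-optimality of the greedy policy. If \<open>T(X) \<le> 1 - \<alpha>\<close> almost surely, the \<open>G\<close>-integrand
  of every policy is almost surely nonnegative, so for a feasible policy it vanishes almost
  surely: such a policy selects only where \<open>p_{C(X)}(X) = T(X) = 1 - \<alpha>\<close>, and there the
  tie-breaking rule gives \<open>w(C(X)) \<le> w(C_max(X))\<close>.\<close>

lemma Tmax_ge: "finite I \<Longrightarrow> c \<in> I \<Longrightarrow> p c x \<le> Tmax I p x"
  unfolding Tmax_def by (intro Max_ge) auto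

lemma borel_measurable_Tmax:
  "finite I \<Longrightarrow> (\<And>c. c \<in> I \<Longrightarrow> p c \<in> borel_measurable M) \<Longrightarrow> Tmax I p \<in> borel_measurable M"
  unfolding Tmax_def[abs_def] by (rule borel_measurable_Max)

lemma (in finite_measure) integrable_bounded_real:
  fixes f :: "'a \<Rightarrow> real"
  assumes "f \<in> borel_measurable M" "\<And>\<omega>. \<omega> \<in> space M \<Longrightarrow> \<bar>f \<omega>\<bar> \<le> K"
  shows "integrable M f"
  using assms by (intro integrable_const_bound[where B=K]) (auto intro!: AE_I2)

locale set_prediction = prob_space M
  for M :: "'a measure" and MX :: "'x measure" and MY :: "'y measure"
    and X :: "'a \<Rightarrow> 'x" and Y :: "'a \<Rightarrow> 'y" and I :: "'y set set"
    and p :: "'y set \<Rightarrow> 'x \<Rightarrow> real" +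
  assumes X_measurable[measurable]: "X \<in> measurable M MX"
    and Y_measurable[measurable]: "Y \<in> measurable M MY"
    and finite_I: "finite I" and I_sets: "I \<subseteq> sets MY"
    and p_measurable: "\<And>c. c \<in> I \<Longrightarrow> p c \<in> borel_measurable MX"
    and p_nonneg: "\<And>c x. c \<in> I \<Longrightarrow> x \<in> space MX \<Longrightarrow> 0 \<le> p c x"
    and p_le_1: "\<And>c x. c \<in> I \<Longrightarrow> x \<in> space MX \<Longrightarrow> p c x \<le> 1"
    and p_cond_prob: "\<And>c A. c \<in> I \<Longrightarrow> A \<in> sets MX \<Longrightarrow>
        measure M {\<omega> \<in> space M. X \<omega> \<in> A \<and> Y \<omega> \<in> c} = (\<integral>\<omega>. indicator A (X \<omega>) * p c (X \<omega>) \<partial>M)"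
begin

lemma X_in_space: "\<omega> \<in> space M \<Longrightarrow> X \<omega> \<in> space MX"
  using measurable_space[OF X_measurable] .

lemma policy_in_I: "policy MX I D C \<Longrightarrow> \<omega> \<in> space M \<Longrightarrow> C (X \<omega>) \<in> I"
  using measurable_space[of C MX "count_space I" "X \<omega>"] X_in_space by (simp add: policy_def)

lemma measurable_policy_compose:
  assumes "policy MX I D C" and "\<And>c. c \<in> I \<Longrightarrow> f c \<in> borel_measurable M"
  shows "(\<lambda>\<omega>. f (C (X \<omega>)) \<omega>) \<in> borel_measurable M"
proof (rule measurable_compose_countable'[where I=I])
  show "(\<lambda>\<omega>. C (X \<omega>)) \<in> measurable M (count_space I)"
    using assms(1) measurable_compose[OF X_measurable, of C "count_space I"] by (simp add: policy_def)
qed (simp_all add: assms(2) finite_I countable_finite)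

lemma borel_measurable_policy:
  fixes f :: "'y set \<Rightarrow> 'x \<Rightarrow> real"
  assumes "policy MX I D C" and "\<And>c. c \<in> I \<Longrightarrow> f c \<in> borel_measurable MX"
  shows "(\<lambda>\<omega>. f (C (X \<omega>)) (X \<omega>) * of_bool (D (X \<omega>))) \<in> borel_measurable M"
proof (rule measurable_policy_compose[OF assms(1)])
  have [measurable]: "D \<in> measurable MX (count_space UNIV)"
    using assms(1) by (simp add: policy_def)
  show "(\<lambda>\<omega>. f c (X \<omega>) * of_bool (D (X \<omega>))) \<in> borel_measurable M" if "c \<in> I" for c
  proof -
    note [measurable] = assms(2)[OF that]
    show ?thesis by measurable
  qed
qed

lemma integrable_policy:
  fixes f :: "'y set \<Rightarrow> 'x \<Rightarrow> real"
  assumes "policy MX I D C" and "\<And>c. c \<in> I \<Longrightarrow> f c \<in> borel_measurable MX"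
    and "\<And>c x. c \<in> I \<Longrightarrow> x \<in> space MX \<Longrightarrow> \<bar>f c x\<bar> \<le> K"
  shows "integrable M (\<lambda>\<omega>. f (C (X \<omega>)) (X \<omega>) * of_bool (D (X \<omega>)))"
proof (rule integrable_bounded_real[where K=K])
  show "\<bar>f (C (X \<omega>)) (X \<omega>) * of_bool (D (X \<omega>))\<bar> \<le> K" if "\<omega> \<in> space M" for \<omega>
    using assms(3)[OF policy_in_I[OF assms(1) that] X_in_space[OF that]] by auto
qed (rule borel_measurable_policy[OF assms(1,2)])

lemma integrable_covered:
  assumes "policy MX I D C"
  shows "integrable M (\<lambda>\<omega>. of_bool (Y \<omega> \<in> C (X \<omega>) \<and> D (X \<omega>)) :: real)"
proof (rule integrable_bounded_real[where K=1])
  have "(\<lambda>\<omega>. of_bool (Y \<omega> \<in> c \<and> D (X \<omega>)) :: real) \<in> borel_measurable M" if "c \<in> I" for c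
  proof -
    have [measurable]: "D \<in> measurable MX (count_space UNIV)" "c \<in> sets MY"
      using assms I_sets that by (auto simp: policy_def)
    show ?thesis by measurable
  qed
  then show "(\<lambda>\<omega>. of_bool (Y \<omega> \<in> C (X \<omega>) \<and> D (X \<omega>)) :: real) \<in> borel_measurable M"
    by (rule measurable_policy_compose[OF assms, where f="\<lambda>c \<omega>. of_bool (Y \<omega> \<in> c \<and> D (X \<omega>))"])
qed simp

lemma sets_policy_level:
  assumes "policy MX I D C" "c \<in> I"
  shows "{x \<in> space MX. D x \<and> C x = c} \<in> sets MX"
proof -
  have [measurable]: "D \<in> measurable MX (count_space UNIV)" "C \<in> measurable MX (count_space I)"
    using assms(1) by (auto simp: policy_def)
  show ?thesis using assms(2) by measurable
qed

lemma integral_covered_eq_sum: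
  assumes pol: "policy MX I D C"
  shows "(\<integral>\<omega>. of_bool (Y \<omega> \<in> C (X \<omega>) \<and> D (X \<omega>)) \<partial>M)
       = (\<Sum>c\<in>I. measure M {\<omega> \<in> space M. X \<omega> \<in> {x \<in> space MX. D x \<and> C x = c} \<and> Y \<omega> \<in> c})"
proof -
  define S where "S c = {\<omega> \<in> space M. X \<omega> \<in> {x \<in> space MX. D x \<and> C x = c} \<and> Y \<omega> \<in> c}" for c
  have S_sets: "S c \<in> sets M" if "c \<in> I" for c
  proof -
    note [measurable] = sets_policy_level[OF pol that] subsetD[OF I_sets that]
    show ?thesis unfolding S_def by measurable
  qed
  have "(\<integral>\<omega>. of_bool (Y \<omega> \<in> C (X \<omega>) \<and> D (X \<omega>)) \<partial>M) = (\<integral>\<omega>. (\<Sum>c\<in>I. indicator (S c) \<omega>) \<partial>M :: real)"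
  proof (rule Bochner_Integration.integral_cong[OF refl])
    fix x assume x: "x \<in> space M"
    then have "(\<Sum>c\<in>I. indicator (S c) x)
        = (\<Sum>c\<in>I. if C (X x) = c then of_bool (Y x \<in> c \<and> D (X x)) else 0)"
      using X_in_space by (intro sum.cong) (auto simp: S_def indicator_def)
    also have "\<dots> = of_bool (Y x \<in> C (X x) \<and> D (X x))"
      using policy_in_I[OF pol x] finite_I by (simp add: sum.delta')
    finally show "of_bool (Y x \<in> C (X x) \<and> D (X x)) = (\<Sum>c\<in>I. indicator (S c) x)"
      by (rule sym)
  qed
  also have "\<dots> = (\<Sum>c\<in>I. measure M (S c))"
    using S_sets by (subst Bochner_Integration.integral_sum) (auto simp: less_top[symmetric])
  finally show ?thesis unfolding S_def .
qed

lemma integral_selected_p_eq_sum: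
  assumes pol: "policy MX I D C"
  shows "(\<integral>\<omega>. p (C (X \<omega>)) (X \<omega>) * of_bool (D (X \<omega>)) \<partial>M)
       = (\<Sum>c\<in>I. \<integral>\<omega>. indicator {x \<in> space MX. D x \<and> C x = c} (X \<omega>) * p c (X \<omega>) \<partial>M)"
proof -
  define A where "A c = {x \<in> space MX. D x \<and> C x = c}" for c
  have "(\<integral>\<omega>. p (C (X \<omega>)) (X \<omega>) * of_bool (D (X \<omega>)) \<partial>M)
      = (\<integral>\<omega>. (\<Sum>c\<in>I. indicator (A c) (X \<omega>) * p c (X \<omega>)) \<partial>M)"
  proof (rule Bochner_Integration.integral_cong[OF refl])
    fix x assume x: "x \<in> space M"
    then have "(\<Sum>c\<in>I. indicator (A c) (X x) * p c (X x))
        = (\<Sum>c\<in>I. if C (X x) = c then p c (X x) * of_bool (D (X x)) else 0)"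
      using X_in_space by (intro sum.cong) (auto simp: A_def indicator_def)
    then show "p (C (X x)) (X x) * of_bool (D (X x)) = (\<Sum>c\<in>I. indicator (A c) (X x) * p c (X x))"
      using policy_in_I[OF pol x] finite_I by (simp add: sum.delta')
  qed
  also have "\<dots> = (\<Sum>c\<in>I. \<integral>\<omega>. indicator (A c) (X \<omega>) * p c (X \<omega>) \<partial>M)"
  proof (rule Bochner_Integration.integral_sum, rule integrable_bounded_real[where K=1])
    fix c assume c: "c \<in> I"
    note [measurable] = sets_policy_level[OF pol c, folded A_def] p_measurable[OF c]
    show "(\<lambda>\<omega>. indicator (A c) (X \<omega>) * p c (X \<omega>)) \<in> borel_measurable M"
      by measurable
    show "\<bar>indicator (A c) (X \<omega>) * p c (X \<omega>)\<bar> \<le> 1" if "\<omega> \<in> space M" for \<omega>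
      using p_nonneg[OF c X_in_space[OF that]] p_le_1[OF c X_in_space[OF that]]
      by (simp add: indicator_def)
  qed
  finally show ?thesis unfolding A_def .
qed

lemma integral_covered:
  assumes pol: "policy MX I D C"
  shows "(\<integral>\<omega>. of_bool (Y \<omega> \<in> C (X \<omega>) \<and> D (X \<omega>)) \<partial>M)
       = (\<integral>\<omega>. p (C (X \<omega>)) (X \<omega>) * of_bool (D (X \<omega>)) \<partial>M)"
  unfolding integral_covered_eq_sum[OF pol] integral_selected_p_eq_sum[OF pol]
  by (intro sum.cong refl p_cond_prob sets_policy_level[OF pol])

lemma integrable_selected:
  "policy MX I D C \<Longrightarrow> integrable M (\<lambda>\<omega>. of_bool (D (X \<omega>)) :: real)"
  using integrable_policy[of D C "\<lambda>_ _. 1" 1] by simp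

lemma integral_false_coverage:
  assumes pol: "policy MX I D C"
  shows "(\<integral>\<omega>. of_bool (Y \<omega> \<notin> C (X \<omega>) \<and> D (X \<omega>)) \<partial>M)
       = (\<integral>\<omega>. (1 - p (C (X \<omega>)) (X \<omega>)) * of_bool (D (X \<omega>)) \<partial>M)"
proof -
  have int_p: "integrable M (\<lambda>\<omega>. p (C (X \<omega>)) (X \<omega>) * of_bool (D (X \<omega>)))"
    using p_nonneg p_le_1 by (intro integrable_policy[OF pol, where K=1]) (auto intro!: borel_measurable_diff p_measurable)
  have "(\<integral>\<omega>. of_bool (Y \<omega> \<notin> C (X \<omega>) \<and> D (X \<omega>)) \<partial>M)
      = (\<integral>\<omega>. of_bool (D (X \<omega>)) - of_bool (Y \<omega> \<in> C (X \<omega>) \<and> D (X \<omega>)) \<partial>M)"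
    by (intro Bochner_Integration.integral_cong) auto
  also have "\<dots> = (\<integral>\<omega>. of_bool (D (X \<omega>)) \<partial>M) - (\<integral>\<omega>. p (C (X \<omega>)) (X \<omega>) * of_bool (D (X \<omega>)) \<partial>M)"
    using integrable_selected[OF pol] integrable_covered[OF pol]
    by (simp add: integral_covered[OF pol])
  also have "\<dots> = (\<integral>\<omega>. (1 - p (C (X \<omega>)) (X \<omega>)) * of_bool (D (X \<omega>)) \<partial>M)"
    using integrable_selected[OF pol] int_p by (simp add: left_diff_distrib)
  finally show ?thesis .
qed

lemma G_obj_eq_false_coverage:
  assumes pol: "policy MX I D C"
  shows "G_obj M X p \<alpha> D C
       = (\<integral>\<omega>. of_bool (Y \<omega> \<notin> C (X \<omega>) \<and> D (X \<omega>)) \<partial>M) - \<alpha> * (\<integral>\<omega>. of_bool (D (X \<omega>)) \<partial>M)"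
proof -
  have "integrable M (\<lambda>\<omega>. (1 - p (C (X \<omega>)) (X \<omega>)) * of_bool (D (X \<omega>)))"
    using p_nonneg p_le_1 by (intro integrable_policy[OF pol, where K=1]) (auto intro!: borel_measurable_diff p_measurable)
  then show ?thesis
    unfolding G_obj_def integral_false_coverage[OF pol]
    using integrable_selected[OF pol] by (simp add: left_diff_distrib)
qed

lemma mFCR_le_iff_G_obj_nonpos:
  assumes pol: "policy MX I D C" and "0 \<le> \<alpha>"
  shows "mFCR M X Y D C \<le> \<alpha> \<longleftrightarrow> G_obj M X p \<alpha> D C \<le> 0"
proof -
  define fc :: real where "fc = (\<integral>\<omega>. of_bool (Y \<omega> \<notin> C (X \<omega>) \<and> D (X \<omega>)) \<partial>M)"
  define sel :: real where "sel = (\<integral>\<omega>. of_bool (D (X \<omega>)) \<partial>M)"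
  have "0 \<le> fc" unfolding fc_def by simp
  moreover have "fc \<le> sel"
    unfolding fc_def sel_def integral_false_coverage[OF pol]
    using p_nonneg p_le_1 policy_in_I[OF pol] X_in_space integrable_selected[OF pol]
    by (intro integral_mono integrable_policy[OF pol, where K=1]) (auto intro!: borel_measurable_diff p_measurable)
  ultimately show ?thesis
    unfolding G_obj_eq_false_coverage[OF pol] mFCR_def Let_def fc_def[symmetric] sel_def[symmetric]
    using \<open>0 \<le> \<alpha>\<close> by (auto simp: divide_le_eq)
qed

lemma Tmax_measurable[measurable]: "Tmax I p \<in> borel_measurable MX"
  using borel_measurable_Tmax[OF finite_I p_measurable] .

lemma integrable_G_obj_integrand:
  assumes "policy MX I D C"
  shows "integrable M (\<lambda>\<omega>. (1 - p (C (X \<omega>)) (X \<omega>) - \<alpha>) * of_bool (D (X \<omega>)))"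
proof (rule integrable_policy[OF assms, where K="1 + \<bar>\<alpha>\<bar>"])
  fix c x assume "c \<in> I" "x \<in> space MX"
  then show "\<bar>1 - p c x - \<alpha>\<bar> \<le> 1 + \<bar>\<alpha>\<bar>"
    using p_nonneg[of c x] p_le_1[of c x] by arith
qed (auto intro!: borel_measurable_diff p_measurable)

text \<open>Below the threshold the integrand of \<open>G\<close> is nonnegative, while feasibility makes its
  integral nonpositive; hence it vanishes almost everywhere.\<close>

lemma AE_selected_at_threshold:
  assumes pol: "policy MX I D C" and "0 \<le> \<alpha>" and feasible: "mFCR M X Y D C \<le> \<alpha>"
    and below: "AE \<omega> in M. Tmax I p (X \<omega>) \<le> 1 - \<alpha>"
  shows "AE \<omega> in M. D (X \<omega>) \<longrightarrow> p (C (X \<omega>)) (X \<omega>) = 1 - \<alpha> \<and> Tmax I p (X \<omega>) = 1 - \<alpha>"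
proof -
  define g where "g \<omega> = (1 - p (C (X \<omega>)) (X \<omega>) - \<alpha>) * of_bool (D (X \<omega>))" for \<omega>
  have p_le_Tmax: "p (C (X \<omega>)) (X \<omega>) \<le> Tmax I p (X \<omega>)" if "\<omega> \<in> space M" for \<omega>
    using Tmax_ge[OF finite_I policy_in_I[OF pol that]] .
  have g_nonneg: "AE \<omega> in M. 0 \<le> g \<omega>"
    using below AE_space
  proof eventually_elim
    case (elim \<omega>)
    then show ?case using p_le_Tmax[OF elim(2)] by (simp add: g_def)
  qed
  have "integral\<^sup>L M g \<le> 0"
    using feasible mFCR_le_iff_G_obj_nonpos[OF pol \<open>0 \<le> \<alpha>\<close>] by (simp add: G_obj_def g_def[abs_def])
  then have "AE \<omega> in M. g \<omega> = 0"
    using integral_nonneg_eq_0_iff_AE[OF _ g_nonneg] integral_nonneg_AE[OF g_nonneg]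
      integrable_G_obj_integrand[OF pol] by (simp add: g_def[abs_def])
  then show ?thesis
    using below AE_space
  proof eventually_elim
    case (elim \<omega>)
    then show ?case using p_le_Tmax[OF elim(3)] by (auto simp: g_def)
  qed
qed

context
  fixes \<alpha> :: real and Cmax :: "'x \<Rightarrow> 'y set"
  assumes Cmax_measurable: "Cmax \<in> measurable MX (count_space I)"
    and p_Cmax: "\<And>x. x \<in> space MX \<Longrightarrow> p (Cmax x) x = Tmax I p x"
begin

lemma policy_greedy: "policy MX I (\<lambda>x. 1 - \<alpha> \<le> Tmax I p x) Cmax"
  unfolding policy_def by (intro conjI Cmax_measurable) measurable

lemma G_obj_greedy_le:
  assumes pol: "policy MX I D C"
  shows "G_obj M X p \<alpha> (\<lambda>x. 1 - \<alpha> \<le> Tmax I p x) Cmax \<le> G_obj M X p \<alpha> D C"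
  unfolding G_obj_def
proof (rule integral_mono[OF integrable_G_obj_integrand[OF policy_greedy] integrable_G_obj_integrand[OF pol]])
  fix \<omega> assume "\<omega> \<in> space M"
  then show "(1 - p (Cmax (X \<omega>)) (X \<omega>) - \<alpha>) * of_bool (1 - \<alpha> \<le> Tmax I p (X \<omega>))
      \<le> (1 - p (C (X \<omega>)) (X \<omega>) - \<alpha>) * of_bool (D (X \<omega>))"
    using p_Cmax[OF X_in_space] Tmax_ge[OF finite_I policy_in_I[OF pol], of \<omega> p "X \<omega>"] by auto
qed

lemma G_obj_greedy_nonpos: "G_obj M X p \<alpha> (\<lambda>x. 1 - \<alpha> \<le> Tmax I p x) Cmax \<le> 0"
proof -
  have "G_obj M X p \<alpha> (\<lambda>x. 1 - \<alpha> \<le> Tmax I p x) Cmax \<le> (\<integral>\<omega>. 0 \<partial>M)"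
    unfolding G_obj_def
    by (rule integral_mono[OF integrable_G_obj_integrand[OF policy_greedy]])
      (use p_Cmax[OF X_in_space] in auto)
  then show ?thesis by simp
qed

lemma mFCR_greedy_le: "0 \<le> \<alpha> \<Longrightarrow> mFCR M X Y (\<lambda>x. 1 - \<alpha> \<le> Tmax I p x) Cmax \<le> \<alpha>"
  using mFCR_le_iff_G_obj_nonpos[OF policy_greedy] G_obj_greedy_nonpos by blast

lemma Pi_obj_le_greedy:
  assumes w_nonneg: "\<And>c. c \<in> I \<Longrightarrow> 0 \<le> w c"
    and Cmax_tie: "\<And>x c. x \<in> space MX \<Longrightarrow> c \<in> I \<Longrightarrow> p c x = Tmax I p x \<Longrightarrow> w c \<le> w (Cmax x)"
    and pol: "policy MX I D C" and "0 \<le> \<alpha>" and feasible: "mFCR M X Y D C \<le> \<alpha>"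
    and below: "AE \<omega> in M. Tmax I p (X \<omega>) \<le> 1 - \<alpha>"
  shows "Pi_obj M X w p D C \<le> Pi_obj M X w p (\<lambda>x. 1 - \<alpha> \<le> Tmax I p x) Cmax"
proof -
  have integrable_Pi: "integrable M (\<lambda>\<omega>. w (C' (X \<omega>)) * p (C' (X \<omega>)) (X \<omega>) * of_bool (D' (X \<omega>)))"
    if "policy MX I D' C'" for D' C'
  proof (rule integrable_policy[OF that, where K="\<Sum>c\<in>I. w c"])
    fix c x assume "c \<in> I" "x \<in> space MX"
    then have "\<bar>w c * p c x\<bar> \<le> w c"
      using w_nonneg p_nonneg p_le_1 by (simp add: abs_mult mult_left_le)
    also have "\<dots> \<le> (\<Sum>c\<in>I. w c)"
      using \<open>c \<in> I\<close> w_nonneg finite_I by (intro member_le_sum) auto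
    finally show "\<bar>w c * p c x\<bar> \<le> (\<Sum>c\<in>I. w c)" .
  qed (auto intro!: borel_measurable_times p_measurable)
  show ?thesis
    unfolding Pi_obj_def
  proof (rule integral_mono_AE[OF integrable_Pi[OF pol] integrable_Pi[OF policy_greedy]])
    show "AE \<omega> in M. w (C (X \<omega>)) * p (C (X \<omega>)) (X \<omega>) * of_bool (D (X \<omega>))
        \<le> w (Cmax (X \<omega>)) * p (Cmax (X \<omega>)) (X \<omega>) * of_bool (1 - \<alpha> \<le> Tmax I p (X \<omega>))"
      using AE_selected_at_threshold[OF pol \<open>0 \<le> \<alpha>\<close> feasible below] AE_space
    proof eventually_elim
      case (elim \<omega>)
      have x: "X \<omega> \<in> space MX" and c: "C (X \<omega>) \<in> I" and cmax: "Cmax (X \<omega>) \<in> I"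
        using X_in_space policy_in_I pol policy_greedy elim(2) by blast+
      show ?case
      proof (cases "D (X \<omega>)")
        case True
        then show ?thesis
          using elim(1) p_Cmax[OF x] Cmax_tie[OF x c] p_nonneg[OF c x]
          by (auto intro: mult_right_mono)
      qed (use w_nonneg[OF cmax] p_nonneg[OF cmax x] in simp)
    qed
  qed
qed

end

end

theorem proposition11:
  fixes M :: "'a measure" and MX :: "'x measure" and MY :: "'y measure"
    and X :: "'a \<Rightarrow> 'x" and Y :: "'a \<Rightarrow> 'y"
    and I :: "'y set set" and w :: "'y set \<Rightarrow> real" and B :: real
    and p :: "'y set \<Rightarrow> 'x \<Rightarrow> real" and \<alpha> :: real
    and Cmax :: "'x \<Rightarrow> 'y set"
  assumes "prob_space M"
    and X_rv: "X \<in> measurable M MX" and Y_rv: "Y \<in> measurable M MY"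
    and alpha: "0 < \<alpha>" "\<alpha> < 1"
    and I_fin: "finite I" and I_ne: "I \<noteq> {}" and I_sets: "I \<subseteq> sets MY"
    and w_pos: "\<And>C. C \<in> I \<Longrightarrow> 0 < w C \<and> w C < B"
    and p_meas: "\<And>C. C \<in> I \<Longrightarrow> p C \<in> borel_measurable MX"
    and p_range: "\<And>C x. C \<in> I \<Longrightarrow> x \<in> space MX \<Longrightarrow> 0 \<le> p C x \<and> p C x \<le> 1"
    and p_cond: "\<And>C A. C \<in> I \<Longrightarrow> A \<in> sets MX \<Longrightarrow>
        measure M {\<omega> \<in> space M. X \<omega> \<in> A \<and> Y \<omega> \<in> C}
          = (\<integral>\<omega>. indicator A (X \<omega>) * p C (X \<omega>) \<partial>M)"
    and Cmax_in: "\<And>x. x \<in> space MX \<Longrightarrow> Cmax x \<in> I"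
    and Cmax_arg: "\<And>x. x \<in> space MX \<Longrightarrow> p (Cmax x) x = Tmax I p x"
    and Cmax_tie: "\<And>x C. x \<in> space MX \<Longrightarrow> C \<in> I \<Longrightarrow> p C x = Tmax I p x \<Longrightarrow> w C \<le> w (Cmax x)"
    and Cmax_meas: "Cmax \<in> measurable MX (count_space I)"
  shows "policy MX I (\<lambda>x. Tmax I p x \<ge> 1 - \<alpha>) Cmax
       \<and> mFCR M X Y (\<lambda>x. Tmax I p x \<ge> 1 - \<alpha>) Cmax \<le> \<alpha>
       \<and> (\<forall>D C. policy MX I D C \<longrightarrow>
            G_obj M X p \<alpha> (\<lambda>x. Tmax I p x \<ge> 1 - \<alpha>) Cmax \<le> G_obj M X p \<alpha> D C)
       \<and> (measure M {\<omega> \<in> space M. Tmax I p (X \<omega>) > 1 - \<alpha>} = 0 \<longrightarrow>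
            (\<forall>D C. policy MX I D C \<and> mFCR M X Y D C \<le> \<alpha> \<longrightarrow>
               Pi_obj M X w p D C \<le> Pi_obj M X w p (\<lambda>x. Tmax I p x \<ge> 1 - \<alpha>) Cmax))"
proof -
  interpret set_prediction M MX MY X Y I p
    using assms by (intro set_prediction.intro set_prediction_axioms.intro) auto
  have "0 \<le> \<alpha>" using alpha by simp
  have w_nonneg: "\<And>c. c \<in> I \<Longrightarrow> 0 \<le> w c"
    using w_pos by (simp add: less_imp_le)
  have below: "AE \<omega> in M. Tmax I p (X \<omega>) \<le> 1 - \<alpha>"
    if "measure M {\<omega> \<in> space M. Tmax I p (X \<omega>) > 1 - \<alpha>} = 0"
  proof -
    have "{\<omega> \<in> space M. Tmax I p (X \<omega>) > 1 - \<alpha>} \<in> sets M" by measurable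
    then show ?thesis using that prob_Collect_eq_0 by (simp add: not_less)
  qed
  have optimal: "Pi_obj M X w p D C \<le> Pi_obj M X w p (\<lambda>x. 1 - \<alpha> \<le> Tmax I p x) Cmax"
    if "measure M {\<omega> \<in> space M. Tmax I p (X \<omega>) > 1 - \<alpha>} = 0"
      and "policy MX I D C \<and> mFCR M X Y D C \<le> \<alpha>" for D C
    using that(2) w_nonneg Cmax_tie below[OF that(1)] \<open>0 \<le> \<alpha>\<close>
    by (intro Pi_obj_le_greedy[OF Cmax_meas Cmax_arg]) auto
  show ?thesis
    using policy_greedy[OF Cmax_meas Cmax_arg] mFCR_greedy_le[OF Cmax_meas Cmax_arg \<open>0 \<le> \<alpha>\<close>]
      G_obj_greedy_le[OF Cmax_meas Cmax_arg] optimal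
    by blast
qed

end
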